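(* Let $(E,B,p,\Gamma)$ be a compact graph bundle, let $F:E\to E$ and $f:B\to B$ be continuous with $p\circ F=f\circ p$, $(B,f)$ minimal, and let $M$ be a minimal set of $F$ with $p(M)=B$. Let $H$ be the homeo-part of $f$, and suppose that $M_z$ is finite for some $z\in H$. Then $N:=\min\{\operatorname{card}M_x: x\in H\}$ is finite and there is a residual set $R\subseteq B$ such that $\operatorname{card}M_b=N$ for every $b\in R$.
   Context: A compact graph bundle $(E,B,p,\Gamma)$: $E,B$ compact metric spaces, $\Gamma$ a graph (nonempty compact metric space that is a union of finitely many arcs pairwise disjoint or meeting only at end-points), $p:E\to B$ a continuous surjection such that each $b\in B$ has an open neighbourhood $U$ and a homeomorphism $h:p^{-1}(U)\to U\times\Gamma$ with $\mathrm{pr}_1\circ h=p$. $M_b=M\cap p^{-1}(b)$. Minimal map: no proper nonempty closed invariant subset; minimal set: nonempty closed invariant set on which the map is minimal. Homeo-part of a continuous selfmap $f$ of a compact metric space $X$: the set $H$ of points $x_0\in X$ whose full orbit $\{x\in X:\exists i,j\ge0,\ f^i(x)=f^j(x_0)\}$ is of the form $\{\dots,x_{-2},x_{-1},x_0,x_1,x_2,\dots\}$ with $f(x_n)=x_{n+1}$ for every integer $n$. Residual: complement of a countable union of nowhere dense sets. *)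

theory Defs
  imports "HOL-Analysis.Analysis"
begin

definition is_graph :: "'g::metric_space set \<Rightarrow> bool" where
  "is_graph \<Gamma> \<longleftrightarrow> \<Gamma> \<noteq> {} \<and> compact \<Gamma> \<and>
     (\<exists>A. finite A \<and> (\<forall>g\<in>A. arc g) \<and> \<Gamma> = \<Union>(path_image ` A) \<and>
        (\<forall>g\<in>A. \<forall>h\<in>A. g \<noteq> h \<longrightarrow>
           path_image g \<inter> path_image h \<subseteq>
             {pathstart g, pathfinish g} \<inter> {pathstart h, pathfinish h}))"

definition compact_graph_bundle ::
  "'e::metric_space set \<Rightarrow> 'b::metric_space set \<Rightarrow> ('e \<Rightarrow> 'b) \<Rightarrow> 'g::metric_space set \<Rightarrow> bool" where
  "compact_graph_bundle E B p \<Gamma> \<longleftrightarrow>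
     compact E \<and> compact B \<and> is_graph \<Gamma> \<and> continuous_on E p \<and> p ` E = B \<and>
     (\<forall>b\<in>B. \<exists>U. openin (top_of_set B) U \<and> b \<in> U \<and>
        (\<exists>h h'. homeomorphism {x\<in>E. p x \<in> U} (U \<times> \<Gamma>) h h' \<and>
                (\<forall>x\<in>{x\<in>E. p x \<in> U}. fst (h x) = p x)))"

definition minimal_set :: "('a::metric_space \<Rightarrow> 'a) \<Rightarrow> 'a set \<Rightarrow> 'a set \<Rightarrow> bool" where
  "minimal_set f X M \<longleftrightarrow> M \<subseteq> X \<and> M \<noteq> {} \<and> closed M \<and> f ` M \<subseteq> M \<and>
     (\<forall>A. A \<subseteq> M \<and> A \<noteq> {} \<and> closed A \<and> f ` A \<subseteq> A \<longrightarrow> A = M)"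

definition full_orbit :: "('a \<Rightarrow> 'a) \<Rightarrow> 'a set \<Rightarrow> 'a \<Rightarrow> 'a set" where
  "full_orbit f X x0 = {x\<in>X. \<exists>i j. (f ^^ i) x = (f ^^ j) x0}"

definition homeo_part :: "('a \<Rightarrow> 'a) \<Rightarrow> 'a set \<Rightarrow> 'a set" where
  "homeo_part f X = {x0\<in>X. \<exists>x::int \<Rightarrow> 'a. x 0 = x0 \<and> (\<forall>n. f (x n) = x (n + 1)) \<and>
                              full_orbit f X x0 = range x}"

definition residual_in :: "'a::topological_space set \<Rightarrow> 'a set \<Rightarrow> bool" where
  "residual_in B R \<longleftrightarrow> (\<exists>\<N>. countable \<N> \<and>
     (\<forall>N\<in>\<N>. N \<subseteq> B \<and> (top_of_set B) interior_of ((top_of_set B) closure_of N) = {}) \<and>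
     R = B - \<Union>\<N>)"

end

theory Submission
  imports Defs
begin

text \<open>Points of the homeo-part \<open>H\<close> have a unique preimage, so \<open>F\<close> maps the fibre over
\<open>b \<in> H\<close> onto the fibre over \<open>f b\<close> and fibre cardinalities cannot increase along forward orbits
in \<open>H\<close>. Hence a point \<open>x0 \<in> H\<close> whose fibre has the minimal finite cardinality \<open>N\<close> keeps
cardinality \<open>N\<close> along its forward orbit, which is dense. Having \<open>N + 1\<close> fibre points that are
\<open>\<epsilon>\<close>-separated is a closed condition, so it fails on a dense open set for each \<open>\<epsilon>\<close>.
Conversely \<open>H\<close> is residual: a minimal map on a compact space sends nowhere dense closed sets to
nowhere dense sets under images and preimages, so the points whose grand orbit meets a point
with two \<open>\<epsilon>\<close>-separated preimages form countably many nowhere dense sets, and every point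
avoiding them lies in \<open>H\<close>. By Baire, fibres with fewer than \<open>N\<close> points cannot be dense in an
open set, since a generic point there would be a point of \<open>H\<close> with too small a fibre.\<close>

section \<open>Nowhere dense closed sets\<close>

definition nowhere_dense_closedin :: "'a topology \<Rightarrow> 'a set \<Rightarrow> bool" where
  "nowhere_dense_closedin X C \<longleftrightarrow> closedin X C \<and> X interior_of C = {}"

lemma nowhere_dense_closedin_subtopology_iff:
  assumes "closed B"
  shows "nowhere_dense_closedin (top_of_set B) C \<longleftrightarrow>
           C \<subseteq> B \<and> closed C \<and> (\<forall>U. openin (top_of_set B) U \<and> U \<subseteq> C \<longrightarrow> U = {})"
  using assms by (auto simp: nowhere_dense_closedin_def closedin_closed_eq interior_of_eq_empty)

lemma residual_in_Diff_Union:
  assumes "countable \<N>" and "\<And>C. C \<in> \<N> \<Longrightarrow> nowhere_dense_closedin (top_of_set B) C"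
  shows "residual_in B (B - \<Union>\<N>)"
proof -
  have "C \<subseteq> B \<and> top_of_set B interior_of (top_of_set B closure_of C) = {}" if "C \<in> \<N>" for C
  proof -
    have "closedin (top_of_set B) C" and "top_of_set B interior_of C = {}"
      using assms(2)[OF that] by (auto simp: nowhere_dense_closedin_def)
    then show ?thesis using closedin_subset by (force simp: closure_of_closedin)
  qed
  then show ?thesis using assms(1) unfolding residual_in_def by blast
qed

lemma compact_Baire:
  fixes B :: "'a::metric_space set"
  assumes "compact B" and "countable \<G>"
    and "\<And>C. C \<in> \<G> \<Longrightarrow> nowhere_dense_closedin (top_of_set B) C"
    and "openin (top_of_set B) V" and "V \<noteq> {}"
  obtains b where "b \<in> V" and "b \<notin> \<Union>\<G>"
proof -
  have "compact_space (top_of_set B)"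
    using assms(1) by (simp add: compact_space_subtopology)
  then have "locally_compact_space (top_of_set B)"
    by (rule compact_imp_locally_compact_space)
  moreover have "regular_space (top_of_set B)"
    by (intro metrizable_imp_regular_space metrizable_space_subtopology metrizable_space_euclidean)
  ultimately have "top_of_set B interior_of \<Union>\<G> = {}"
    using assms(2,3) by (intro Baire_category_alt) (auto simp: nowhere_dense_closedin_def)
  then have "\<not> V \<subseteq> \<Union>\<G>"
    using assms(4,5) by (auto simp: interior_of_eq_empty)
  then show ?thesis using that by blast
qed

lemma nowhere_dense_closedin_Int_closure:
  assumes "closed B" and "openin (top_of_set B) V" and "V \<subseteq> closure G" and "G \<subseteq> B"
    and "closed K" and "K \<subseteq> B" and "K \<inter> G = {}"
  shows "nowhere_dense_closedin (top_of_set B) (K \<inter> closure V)"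
  unfolding nowhere_dense_closedin_subtopology_iff[OF \<open>closed B\<close>]
proof (intro conjI allI impI; (elim conjE)?)
  show "K \<inter> closure V \<subseteq> B" "closed (K \<inter> closure V)"
    using assms by auto
  fix W assume W: "openin (top_of_set B) W" "W \<subseteq> K \<inter> closure V"
  obtain T where T: "open T" "W = B \<inter> T" using W(1) by (auto simp: openin_open)
  obtain T' where T': "open T'" "V = B \<inter> T'" using assms(2) by (auto simp: openin_open)
  show "W = {}"
  proof (rule ccontr)
    assume "W \<noteq> {}"
    then have "T \<inter> closure V \<noteq> {}" using W(2) T by blast
    then have "T \<inter> V \<noteq> {}" using open_Int_closure_eq_empty[OF T(1)] by blast
    then have "(T \<inter> T') \<inter> closure G \<noteq> {}" using T' assms(3) by blast
    then obtain g where "g \<in> T" "g \<in> G"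
      using open_Int_closure_eq_empty[OF open_Int[OF T(1) T'(1)]] by blast
    then have "g \<in> K" using W(2) T(2) assms(4) by blast
    then show False using \<open>g \<in> G\<close> assms(7) by blast
  qed
qed

section \<open>Minimal systems\<close>

lemma full_orbit_image_eq: "full_orbit f X (f x) = full_orbit f X x"
proof -
  have "(\<exists>i j. (f ^^ i) y = (f ^^ j) (f x)) \<longleftrightarrow> (\<exists>i j. (f ^^ i) y = (f ^^ j) x)" for y
  proof
    assume "\<exists>i j. (f ^^ i) y = (f ^^ j) (f x)"
    then show "\<exists>i j. (f ^^ i) y = (f ^^ j) x" by (metis funpow_Suc_right o_apply)
  next
    assume "\<exists>i j. (f ^^ i) y = (f ^^ j) x"
    then obtain i j where "(f ^^ i) y = (f ^^ j) x" by blast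
    then have "(f ^^ Suc i) y = (f ^^ j) (f x)" by (simp add: funpow_swap1)
    then show "\<exists>i j. (f ^^ i) y = (f ^^ j) (f x)" by blast
  qed
  then show ?thesis unfolding full_orbit_def by blast
qed

lemma funpow_shift_int:
  assumes "\<And>n. f (s n) = s (n + 1)"
  shows "s (m + int k) = (f ^^ k) (s m)"
proof (induction k)
  case (Suc k)
  have "s (m + int (Suc k)) = f (s (m + int k))" using assms[of "m + int k"] by (simp add: ac_simps)
  then show ?case using Suc.IH by simp
qed simp

locale minimal_system =
  fixes B :: "'b::metric_space set" and f :: "'b \<Rightarrow> 'b"
  assumes compact_B: "compact B" and continuous_f: "continuous_on B f"
    and f_into: "f ` B \<subseteq> B" and minimal: "minimal_set f B B"
begin

lemma f_Pi: "f \<in> B \<rightarrow> B"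
  using f_into by blast

lemma closed_B: "closed B"
  using compact_B by (rule compact_imp_closed)

lemma B_nonempty: "B \<noteq> {}"
  using minimal by (simp add: minimal_set_def)

lemma invariant_closed_eq:
  "A \<subseteq> B \<Longrightarrow> A \<noteq> {} \<Longrightarrow> closed A \<Longrightarrow> f ` A \<subseteq> A \<Longrightarrow> A = B"
  using minimal by (simp add: minimal_set_def)

lemma image_eq: "f ` B = B"
  using compact_continuous_image[OF continuous_f compact_B] f_into B_nonempty
  by (intro invariant_closed_eq) (auto intro: compact_imp_closed)

lemma funpow_in: "x \<in> B \<Longrightarrow> (f ^^ k) x \<in> B"
  using f_into by (induction k) auto

lemma continuous_on_funpow: "continuous_on B (f ^^ k)"
proof (induction k)
  case (Suc k)
  have "continuous_on B (f \<circ> (f ^^ k))"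
    using funpow_in by (intro continuous_on_compose[OF Suc continuous_on_subset[OF continuous_f]]) auto
  then show ?case by simp
qed simp

lemma subset_image_Int_vimage:
  assumes "Q \<subseteq> B"
  shows "Q \<subseteq> f ` (B \<inter> f -` Q)"
proof
  fix q assume "q \<in> Q"
  then obtain a where "a \<in> B" "q = f a" using assms image_eq by (metis imageE subsetD)
  then show "q \<in> f ` (B \<inter> f -` Q)" using \<open>q \<in> Q\<close> by blast
qed

lemma nowhere_dense_iff:
  "nowhere_dense_closedin (top_of_set B) C \<longleftrightarrow>
     C \<subseteq> B \<and> closed C \<and> (\<forall>U. openin (top_of_set B) U \<and> U \<subseteq> C \<longrightarrow> U = {})"
  by (rule nowhere_dense_closedin_subtopology_iff[OF closed_B])

lemma backward_chain_in:
  assumes "f ` C = B" and "C \<subseteq> B" and "y \<in> B"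
  shows "\<exists>x\<in>B. (f ^^ n) x = y \<and> (\<forall>k<n. (f ^^ k) x \<in> C)"
  using \<open>y \<in> B\<close>
proof (induction n arbitrary: y)
  case (Suc n)
  obtain c where c: "c \<in> C" "f c = y" using Suc.prems assms(1) by blast
  then obtain x where x: "x \<in> B" "(f ^^ n) x = c" "\<forall>k<n. (f ^^ k) x \<in> C"
    using Suc.IH assms(2) by blast
  have "\<forall>k<Suc n. (f ^^ k) x \<in> C"
    using x c by (auto simp: less_Suc_eq)
  then show ?case using x c by auto
qed auto

text \<open>The points whose whole forward orbit stays in \<open>C\<close> form a nonempty (by compactness)
closed invariant set.\<close>

lemma closed_image_eq_imp_eq:
  assumes "closed C" and "C \<subseteq> B" and "f ` C = B"
  shows "C = B"
proof -
  define Z where "Z = B \<inter> (\<Inter>k. B \<inter> (f ^^ k) -` C)"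
  have closed_pre: "closed (B \<inter> (f ^^ k) -` C)" for k
    using continuous_closed_preimage[OF continuous_on_funpow closed_B assms(1)] .
  have "Z \<noteq> {}" unfolding Z_def
  proof (rule compact_imp_fip_image[OF compact_B closed_pre])
    fix I :: "nat set" assume "finite I"
    obtain y where "y \<in> B" using B_nonempty by blast
    then obtain x where x: "x \<in> B" "\<forall>k<Suc (Max (insert 0 I)). (f ^^ k) x \<in> C"
      using backward_chain_in[OF assms(3,2)] by blast
    have "x \<in> B \<inter> (\<Inter>k\<in>I. B \<inter> (f ^^ k) -` C)"
      using x \<open>finite I\<close> by (auto simp: le_imp_less_Suc)
    then show "B \<inter> (\<Inter>k\<in>I. B \<inter> (f ^^ k) -` C) \<noteq> {}" by blast
  qed
  moreover have "f ` Z \<subseteq> Z"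
  proof
    fix y assume "y \<in> f ` Z"
    then obtain x where x: "x \<in> B" "\<And>k. (f ^^ k) x \<in> C" "y = f x"
      unfolding Z_def by blast
    have "(f ^^ k) (f x) \<in> C" for k
      using x(2)[of "Suc k"] by (simp only: funpow_Suc_right o_apply)
    then show "y \<in> Z" using x f_into unfolding Z_def by auto
  qed
  moreover have "closed Z" unfolding Z_def using closed_pre closed_B by blast
  ultimately have "Z = B" by (intro invariant_closed_eq) (auto simp: Z_def)
  have "B \<subseteq> C"
  proof
    fix x assume "x \<in> B"
    then have "x \<in> B \<inter> (f ^^ 0) -` C" using \<open>Z = B\<close> unfolding Z_def by blast
    then show "x \<in> C" by simp
  qed
  then show ?thesis using assms(2) by blast
qed

lemma open_with_preimage_inside:
  assumes "openin (top_of_set B) V" and "V \<noteq> {}"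
  obtains Q where "openin (top_of_set B) Q" and "Q \<noteq> {}" and "B \<inter> f -` Q \<subseteq> V"
proof
  have closed_rest: "closed (B - V)"
    using assms(1) closed_B by (metis closedin_closed_eq closedin_diff closedin_self)
  moreover have "B \<inter> (B - V) = B - V" by blast
  ultimately have "compact (B - V)"
    using compact_Int_closed[OF compact_B closed_rest] by simp
  then have "compact (f ` (B - V))"
    by (intro compact_continuous_image continuous_on_subset[OF continuous_f]) auto
  then show "openin (top_of_set B) (B - f ` (B - V))"
    using f_into by (intro openin_diff) (auto intro: closed_subset compact_imp_closed)
  have "f ` (B - V) \<noteq> B"
    using closed_image_eq_imp_eq[OF closed_rest] assms openin_imp_subset by blast
  then show "B - f ` (B - V) \<noteq> {}" using f_into by auto
qed auto

lemma nowhere_dense_preimage: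
  assumes "nowhere_dense_closedin (top_of_set B) C"
  shows "nowhere_dense_closedin (top_of_set B) (B \<inter> f -` C)"
  unfolding nowhere_dense_iff
proof (intro conjI allI impI; (elim conjE)?)
  show "B \<inter> f -` C \<subseteq> B" by blast
  show "closed (B \<inter> f -` C)"
    using continuous_closed_preimage[OF continuous_f closed_B] assms by (auto simp: nowhere_dense_iff)
  fix U assume U: "openin (top_of_set B) U" "U \<subseteq> B \<inter> f -` C"
  show "U = {}"
  proof (rule ccontr)
    assume "U \<noteq> {}"
    then obtain Q where Q: "openin (top_of_set B) Q" "Q \<noteq> {}" "B \<inter> f -` Q \<subseteq> U"
      using open_with_preimage_inside U(1) by blast
    have "Q \<subseteq> f ` (B \<inter> f -` Q)" using subset_image_Int_vimage openin_imp_subset[OF Q(1)] by blast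
    then have "Q \<subseteq> C" using Q(3) U(2) by blast
    then show False using Q(1,2) assms by (auto simp: nowhere_dense_iff)
  qed
qed

lemma nowhere_dense_image:
  assumes "nowhere_dense_closedin (top_of_set B) C"
  shows "nowhere_dense_closedin (top_of_set B) (f ` C)"
  unfolding nowhere_dense_iff
proof (intro conjI allI impI; (elim conjE)?)
  have C: "C \<subseteq> B" "closed C" "\<And>U. openin (top_of_set B) U \<Longrightarrow> U \<subseteq> C \<Longrightarrow> U = {}"
    using assms by (auto simp: nowhere_dense_iff)
  show "f ` C \<subseteq> B" using C(1) f_into by blast
  have "compact C" using compact_Int_closed[OF compact_B C(2)] C(1) by (simp add: Int_absorb1)
  then show "closed (f ` C)"
    by (intro compact_imp_closed compact_continuous_image continuous_on_subset[OF continuous_f C(1)])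
  fix U assume U: "openin (top_of_set B) U" "U \<subseteq> f ` C"
  show "U = {}"
  proof (rule ccontr)
    assume "U \<noteq> {}"
    define W where "W = B \<inter> f -` U"
    have W: "openin (top_of_set B) W"
      using continuous_openin_preimage[OF continuous_f f_Pi U(1)] by (simp add: W_def)
    have "W \<noteq> {}"
      using \<open>U \<noteq> {}\<close> subset_image_Int_vimage[OF openin_imp_subset[OF U(1)]] unfolding W_def by blast
    then have "\<not> W \<subseteq> C" using C(3) W by blast
    moreover have "openin (top_of_set B) (W - C)"
      using W C(1,2) by (intro openin_diff) (auto intro: closed_subset)
    ultimately obtain Q where Q: "openin (top_of_set B) Q" "Q \<noteq> {}" "B \<inter> f -` Q \<subseteq> W - C"
      using open_with_preimage_inside by blast
    obtain a where a: "a \<in> B" "f a \<in> Q"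
      using Q(2) subset_image_Int_vimage[OF openin_imp_subset[OF Q(1)]] by blast
    then have "f a \<in> U" using Q(3) unfolding W_def by blast
    then obtain c where "c \<in> C" "f c = f a" using U(2) by auto
    then show False using Q(3) a C(1) by blast
  qed
qed

lemma nowhere_dense_funpow_image:
  assumes "nowhere_dense_closedin (top_of_set B) C"
  shows "nowhere_dense_closedin (top_of_set B) ((f ^^ i) ` C)"
proof (induction i)
  case (Suc i)
  have "(f ^^ Suc i) ` C = f ` (f ^^ i) ` C" by (simp add: image_comp)
  then show ?case using nowhere_dense_image[OF Suc.IH] by (simp only:)
qed (use assms in simp)

lemma nowhere_dense_funpow_preimage:
  assumes "nowhere_dense_closedin (top_of_set B) C"
  shows "nowhere_dense_closedin (top_of_set B) (B \<inter> (f ^^ j) -` C)"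
proof (induction j)
  case 0
  then show ?case using assms by (auto simp: nowhere_dense_iff Int_absorb1)
next
  case (Suc j)
  have "B \<inter> (f ^^ Suc j) -` C = B \<inter> f -` (B \<inter> (f ^^ j) -` C)"
    using f_into by (auto simp: funpow_swap1)
  then show ?case using nowhere_dense_preimage[OF Suc.IH] by (simp only:)
qed

lemma orbit_meets_open:
  assumes "x \<in> B" and "openin (top_of_set B) U" and "U \<noteq> {}"
  obtains n where "(f ^^ n) x \<in> U"
proof -
  define Orb where "Orb = range (\<lambda>n. (f ^^ n) x)"
  have "Orb \<subseteq> B" using funpow_in[OF assms(1)] by (auto simp: Orb_def)
  then have closure_Orb: "closure Orb \<subseteq> B" using closed_B by (rule closure_minimal)
  have "f ((f ^^ n) x) \<in> Orb" for n
    unfolding Orb_def by (rule range_eqI[of _ _ "Suc n"]) simp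
  then have "f ` Orb \<subseteq> Orb" unfolding Orb_def by blast
  then have "f ` closure Orb \<subseteq> closure Orb"
    using closure_subset continuous_on_subset[OF continuous_f closure_Orb]
    by (intro image_closure_subset) auto
  then have "closure Orb = B"
    using closure_Orb by (intro invariant_closed_eq) (auto simp: Orb_def)
  obtain T where T: "open T" "U = B \<inter> T" using assms(2) by (auto simp: openin_open)
  then have "T \<inter> closure Orb \<noteq> {}" using assms(3) \<open>closure Orb = B\<close> by blast
  then have "T \<inter> Orb \<noteq> {}" using open_Int_closure_eq_empty[OF T(1)] by blast
  then show ?thesis using that T(2) \<open>Orb \<subseteq> B\<close> by (auto simp: Orb_def)
qed

lemma periodic_point_imp_finite:
  assumes "q \<in> B" and "n \<ge> 1" and "(f ^^ n) q = q"
  shows "finite B"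
proof -
  define Orb where "Orb = (\<lambda>k. (f ^^ k) q) ` {..<n}"
  have "f ` Orb \<subseteq> Orb"
  proof
    fix y assume "y \<in> f ` Orb"
    then obtain k where k: "k < n" "y = f ((f ^^ k) q)" unfolding Orb_def by blast
    show "y \<in> Orb"
    proof (cases "Suc k < n")
      case False
      then have "n = Suc k" using k by simp
      then have "y = q" using k(2) assms(3) by simp
      then show ?thesis unfolding Orb_def using assms(2) by (intro image_eqI[of _ _ 0]) auto
    next
      case True
      then show ?thesis unfolding Orb_def using k(2) by (intro image_eqI[of _ _ "Suc k"]) auto
    qed
  qed
  moreover have "Orb \<subseteq> B" using funpow_in[OF assms(1)] by (auto simp: Orb_def)
  moreover have "q \<in> Orb" unfolding Orb_def using assms(2) by (intro image_eqI[of _ _ 0]) auto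
  ultimately have "Orb = B"
    by (intro invariant_closed_eq) (auto simp: Orb_def intro: finite_imp_closed)
  then show ?thesis by (simp add: Orb_def flip: \<open>Orb = B\<close>)
qed


section \<open>The homeo-part of a minimal system is residual\<close>

text \<open>A second preimage in \<open>B\<close> lies on the full orbit and makes it periodic; minimality then
forces \<open>B\<close> to be a finite periodic orbit, on which the surjection \<open>f\<close> is injective.\<close>

lemma homeo_part_unique_preimage:
  assumes b: "b \<in> homeo_part f B" and "a \<in> B" and "f a = f b"
  shows "a = b"
proof -
  obtain s :: "int \<Rightarrow> 'b" where s0: "s 0 = b" and s_step: "\<And>n. f (s n) = s (n + 1)"
    and s_range: "full_orbit f B b = range s"
    using b unfolding homeo_part_def by blast
  have sB: "s k \<in> B" for k using s_range unfolding full_orbit_def by blast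
  have "a \<in> full_orbit f B b"
    using assms(2,3) unfolding full_orbit_def by (auto intro!: exI[of _ 1])
  then obtain m where m: "a = s m" using s_range by blast
  show ?thesis
  proof (cases "m = 0")
    case False
    have "s (m + 1) = s 1" using s_step[of m] s_step[of 0] assms(3) m s0 by simp
    then obtain i j where ij: "i < j" "s i = s j"
    proof (cases "m < 0")
      case True
      then show ?thesis using that[of "m + 1" 1] \<open>s (m + 1) = s 1\<close> by simp
    next
      case False
      then show ?thesis using that[of 1 "m + 1"] \<open>s (m + 1) = s 1\<close> \<open>m \<noteq> 0\<close> by simp
    qed
    have "(f ^^ nat (j - i)) (s i) = s i"
      using funpow_shift_int[of f s, OF s_step, of i "nat (j - i)"] ij by simp
    then have "finite B" using ij(1) by (intro periodic_point_imp_finite[OF sB]) auto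
    then have "inj_on f B" using image_eq by (intro finite_surj_inj) auto
    then show ?thesis using assms b unfolding homeo_part_def inj_on_def by blast
  qed (use m s0 in simp)
qed

lemma homeo_part_image:
  assumes b: "b \<in> homeo_part f B"
  shows "f b \<in> homeo_part f B"
proof -
  obtain s :: "int \<Rightarrow> 'b" where s0: "s 0 = b" and s_step: "\<And>n. f (s n) = s (n + 1)"
    and s_range: "full_orbit f B b = range s"
    using b unfolding homeo_part_def by blast
  have "range (\<lambda>n. s (n + 1)) = range s"
  proof
    show "range s \<subseteq> range (\<lambda>n. s (n + 1))"
    proof
      fix y assume "y \<in> range s"
      then obtain k where "y = s k" by blast
      then show "y \<in> range (\<lambda>n. s (n + 1))" by (intro range_eqI[of _ _ "k - 1"]) simp
    qed
  qed auto
  moreover have fb: "f b = s 1" using s_step[of 0] s0 by simp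
  moreover have "full_orbit f B (s 1) = range s"
    using full_orbit_image_eq[of f B b] s_range fb by simp
  moreover have "s 1 \<in> B" using s_range unfolding full_orbit_def by blast
  ultimately show ?thesis
    unfolding fb homeo_part_def
    using s_step by (intro CollectI conjI exI[of _ "\<lambda>n. s (n + 1)"]) auto
qed

lemma backward_orbit_exists:
  assumes "x \<in> B"
  obtains g where "g 0 = x" and "\<And>n. g n \<in> B" and "\<And>n. f (g (Suc n)) = g n"
proof -
  have "\<exists>g. \<forall>n. (g n \<in> B \<and> (n = 0 \<longrightarrow> g n = x)) \<and> f (g (Suc n)) = g n"
  proof (rule dependent_nat_choice)
    fix y and n :: nat assume "y \<in> B \<and> (n = 0 \<longrightarrow> y = x)"
    then show "\<exists>z. (z \<in> B \<and> (Suc n = 0 \<longrightarrow> z = x)) \<and> f z = y"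
      using image_eq by (metis Zero_not_Suc imageE)
  qed (use assms in blast)
  then show ?thesis using that by blast
qed

lemma two_sided_orbit_exists:
  assumes x: "x \<in> B"
  obtains s :: "int \<Rightarrow> 'b" where "s 0 = x" and "\<And>k. f (s k) = s (k + 1)"
    and "\<And>k. s k \<in> full_orbit f B x"
proof -
  obtain g where g0: "g 0 = x" and gB: "\<And>n. g n \<in> B" and g_step: "\<And>n. f (g (Suc n)) = g n"
    using backward_orbit_exists[OF x] by blast
  have g_iter: "(f ^^ n) (g n) = x" for n
    by (induction n) (simp_all add: g0 funpow_swap1 g_step)
  define s where "s k = (if 0 \<le> k then (f ^^ nat k) x else g (nat (- k)))" for k :: int
  have s0: "s 0 = x" by (simp add: s_def)
  have s_step: "f (s k) = s (k + 1)" for k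
  proof (cases "0 \<le> k")
    case True
    then show ?thesis by (simp add: s_def nat_add_distrib)
  next
    case False
    then have "nat (- k) = Suc (nat (- (k + 1)))" by simp
    then show ?thesis using False g0 g_step by (auto simp: s_def)
  qed
  have sB: "s k \<in> B" for k by (simp add: s_def gB funpow_in[OF x])
  have s_orbit: "s k \<in> full_orbit f B x" for k
  proof (cases "0 \<le> k")
    case True
    then have "(f ^^ 0) (s k) = (f ^^ nat k) x" by (simp add: s_def)
    then show ?thesis using sB unfolding full_orbit_def by blast
  next
    case False
    then have "(f ^^ nat (- k)) (s k) = (f ^^ 0) x" by (simp add: s_def g_iter)
    then show ?thesis using sB unfolding full_orbit_def by blast
  qed
  show ?thesis using s0 s_step s_orbit by (rule that)
qed

text \<open>Injectivity on the full orbit makes every two-sided orbit through \<open>x\<close> exhaust it.\<close>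

lemma homeo_part_if_inj_on_full_orbit:
  assumes x: "x \<in> B" and inj: "inj_on f (full_orbit f B x)"
  shows "x \<in> homeo_part f B"
proof -
  obtain s :: "int \<Rightarrow> 'b" where s0: "s 0 = x" and s_step: "\<And>k. f (s k) = s (k + 1)"
    and s_orbit: "\<And>k. s k \<in> full_orbit f B x"
    using two_sided_orbit_exists[OF x] by blast
  have orbit_point: "y = s (int j - int i)" if "y \<in> B" "(f ^^ i) y = (f ^^ j) x" for i j y
    using that
  proof (induction i arbitrary: y)
    case 0
    have "s (0 + int j) = (f ^^ j) (s 0)" by (rule funpow_shift_int[of f s, OF s_step])
    then show ?case using 0 s0 by simp
  next
    case (Suc i)
    have "(f ^^ i) (f y) = (f ^^ j) x" using Suc.prems by (simp add: funpow_swap1)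
    then have "f y = f (s (int j - int (Suc i)))"
      using Suc.IH Suc.prems(1) f_into s_step[of "int j - int (Suc i)"] by auto
    moreover have "y \<in> full_orbit f B x" using Suc.prems unfolding full_orbit_def by blast
    ultimately show ?case using inj_onD[OF inj _ _ s_orbit] by blast
  qed
  have "full_orbit f B x = range s"
    using s_orbit orbit_point unfolding full_orbit_def by blast
  then show ?thesis unfolding homeo_part_def using x s0 s_step by blast
qed

definition branch_points :: "real \<Rightarrow> 'b set" where
  "branch_points \<delta> =
     (\<lambda>z. f (fst z)) ` {z \<in> B \<times> B. f (fst z) = f (snd z) \<and> \<delta> \<le> dist (fst z) (snd z)}"

lemma closed_branch_points: "closed (branch_points \<delta>)"
proof -
  define P where "P = {z \<in> B \<times> B. f (fst z) = f (snd z) \<and> \<delta> \<le> dist (fst z) (snd z)}"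
  have f_fst: "continuous_on (B \<times> B) (\<lambda>z. f (fst z))"
    by (rule continuous_on_compose2[OF continuous_f]) (auto intro: continuous_on_fst continuous_on_snd continuous_on_id)
  have f_snd: "continuous_on (B \<times> B) (\<lambda>z. f (snd z))"
    by (rule continuous_on_compose2[OF continuous_f]) (auto intro: continuous_on_fst continuous_on_snd continuous_on_id)
  have "P = (B \<times> B) \<inter> (\<lambda>z. (dist (f (fst z)) (f (snd z)), dist (fst z) (snd z))) -` ({0} \<times> {\<delta>..})"
    by (auto simp: P_def)
  also have "closed \<dots>"
    using f_fst f_snd closed_B
    by (intro continuous_closed_preimage closed_Times)
      (auto intro!: continuous_on_Pair continuous_on_dist continuous_on_fst continuous_on_snd continuous_on_id)
  finally have "compact ((B \<times> B) \<inter> P)"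
    by (intro compact_Int_closed compact_Times compact_B)
  moreover have "(B \<times> B) \<inter> P = P" by (auto simp: P_def)
  ultimately have "compact P" by simp
  moreover have "branch_points \<delta> = (\<lambda>z. f (fst z)) ` P"
    by (simp add: branch_points_def P_def)
  moreover have "continuous_on P (\<lambda>z. f (fst z))"
    using f_fst by (rule continuous_on_subset) (auto simp: P_def)
  ultimately show ?thesis by (metis compact_continuous_image compact_imp_closed)
qed

lemma nowhere_dense_branch_points:
  assumes "\<delta> > 0"
  shows "nowhere_dense_closedin (top_of_set B) (branch_points \<delta>)"
  unfolding nowhere_dense_iff
proof (intro conjI allI impI closed_branch_points; (elim conjE)?)
  show "branch_points \<delta> \<subseteq> B" using f_into by (auto simp: branch_points_def)
  fix U assume U: "openin (top_of_set B) U" "U \<subseteq> branch_points \<delta>"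
  show "U = {}"
  proof (rule ccontr)
    assume "U \<noteq> {}"
    then obtain a0 where a0: "a0 \<in> B" "f a0 \<in> U"
      using subset_image_Int_vimage[OF openin_imp_subset[OF U(1)]] by blast
    define V where "V = (B \<inter> f -` U) \<inter> ball a0 (\<delta> / 2)"
    have "openin (top_of_set B) V"
      unfolding V_def by (rule openin_Int_open[OF continuous_openin_preimage[OF continuous_f f_Pi U(1)]]) simp
    moreover have "a0 \<in> V" using a0 assms by (simp add: V_def)
    ultimately obtain Q where Q: "openin (top_of_set B) Q" "Q \<noteq> {}" "B \<inter> f -` Q \<subseteq> V"
      using open_with_preimage_inside by blast
    obtain a where a: "a \<in> B" "f a \<in> Q"
      using Q(2) subset_image_Int_vimage[OF openin_imp_subset[OF Q(1)]] by blast
    then have "f a \<in> branch_points \<delta>" using Q(3) U(2) unfolding V_def by blast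
    then obtain a1 a2 where a12: "a1 \<in> B" "a2 \<in> B" "f a1 = f a" "f a2 = f a" "\<delta> \<le> dist a1 a2"
      unfolding branch_points_def by force
    then have "a1 \<in> ball a0 (\<delta> / 2)" "a2 \<in> ball a0 (\<delta> / 2)"
      using Q(3) a(2) unfolding V_def by auto
    then have "dist a0 a1 < \<delta> / 2" "dist a0 a2 < \<delta> / 2" by simp_all
    then have "dist a1 a2 < \<delta>" using dist_triangle3[of a1 a2 a0] by linarith
    then show False using a12(5) by simp
  qed
qed

text \<open>The grand orbits of branch points, indexed by the separation \<open>1 / (n + 1)\<close> and by the
iterates \<open>i\<close>, \<open>j\<close> connecting a point to the branch point.\<close>

definition branch_orbit_sets :: "'b set set" where
  "branch_orbit_sets = range (\<lambda>(n, i, j). B \<inter> (f ^^ j) -` ((f ^^ i) ` branch_points (1 / Suc n)))"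

lemma countable_branch_orbit_sets: "countable branch_orbit_sets"
  by (simp add: branch_orbit_sets_def)

lemma nowhere_dense_branch_orbit_sets:
  "C \<in> branch_orbit_sets \<Longrightarrow> nowhere_dense_closedin (top_of_set B) C"
  by (auto simp: branch_orbit_sets_def intro!: nowhere_dense_funpow_preimage
      nowhere_dense_funpow_image nowhere_dense_branch_points)

lemma homeo_part_if_notin_branch_orbit_sets:
  assumes x: "x \<in> B" and "x \<notin> \<Union> branch_orbit_sets"
  shows "x \<in> homeo_part f B"
proof (rule homeo_part_if_inj_on_full_orbit[OF x], rule inj_onI, rule ccontr)
  fix a a' assume a: "a \<in> full_orbit f B x" and a': "a' \<in> full_orbit f B x"
    and eq: "f a = f a'" and "a \<noteq> a'"
  then obtain n where n: "1 / real (Suc n) < dist a a'"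
    using reals_Archimedean[of "dist a a'"] by (auto simp: inverse_eq_divide)
  obtain i j where ij: "(f ^^ i) a = (f ^^ j) x" using a unfolding full_orbit_def by blast
  have "a \<in> B" "a' \<in> B" using a a' unfolding full_orbit_def by auto
  then have "f a \<in> branch_points (1 / Suc n)"
    using eq n unfolding branch_points_def by (intro image_eqI[of _ _ "(a, a')"]) auto
  moreover have "(f ^^ Suc j) x = (f ^^ i) (f a)"
    using arg_cong[OF ij, of f] by (simp add: funpow_swap1)
  ultimately have "x \<in> B \<inter> (f ^^ Suc j) -` ((f ^^ i) ` branch_points (1 / Suc n))"
    using x by auto
  then show False
    using assms(2) unfolding branch_orbit_sets_def by blast
qed

lemma homeo_part_generic_point:
  assumes "openin (top_of_set B) V" and "V \<noteq> {}" and "countable \<G>"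
    and "\<And>C. C \<in> \<G> \<Longrightarrow> nowhere_dense_closedin (top_of_set B) C"
  obtains b where "b \<in> V" and "b \<in> homeo_part f B" and "b \<notin> \<Union>\<G>"
proof -
  have countable: "countable (\<G> \<union> branch_orbit_sets)"
    using assms(3) countable_branch_orbit_sets by simp
  have nowhere_dense: "nowhere_dense_closedin (top_of_set B) C" if "C \<in> \<G> \<union> branch_orbit_sets" for C
    using that assms(4) nowhere_dense_branch_orbit_sets by blast
  obtain b where b: "b \<in> V" "b \<notin> \<Union>(\<G> \<union> branch_orbit_sets)"
    using compact_Baire[OF compact_B countable nowhere_dense assms(1,2)] by blast
  moreover have "b \<in> B" using b(1) openin_imp_subset[OF assms(1)] by blast
  ultimately show ?thesis
    using that homeo_part_if_notin_branch_orbit_sets by blast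
qed

end

section \<open>Fibres of a factor of a minimal system\<close>

lemma finite_imp_uniformly_discrete:
  fixes S :: "'a::metric_space set"
  assumes "finite S"
  shows "\<exists>\<delta>>0. \<forall>x\<in>S. \<forall>y\<in>S. x \<noteq> y \<longrightarrow> \<delta> \<le> dist x y"
  using assms
proof (induction S rule: finite_induct)
  case empty
  show ?case by (rule exI[of _ 1]) simp
next
  case (insert a S)
  obtain \<delta> where \<delta>: "\<delta> > 0" "\<forall>x\<in>S. \<forall>y\<in>S. x \<noteq> y \<longrightarrow> \<delta> \<le> dist x y"
    using insert.IH by auto
  obtain d where d: "d > 0" "\<forall>x\<in>S. x \<noteq> a \<longrightarrow> d \<le> dist a x"
    using finite_set_avoid[OF insert.hyps(1)] by auto
  have "min \<delta> d \<le> dist x y" if "x \<in> insert a S" "y \<in> insert a S" "x \<noteq> y" for x y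
    using that \<delta>(2) d(2) by (auto simp: dist_commute intro: min.coboundedI1 min.coboundedI2)
  then show ?case using \<delta>(1) d(1) by (intro exI[of _ "min \<delta> d"]) auto
qed

lemma compact_common_convergent_subsequence:
  fixes g :: "nat \<Rightarrow> nat \<Rightarrow> 'a::metric_space"
  assumes "compact S" and "\<And>m i. i < k \<Longrightarrow> g m i \<in> S"
  shows "\<exists>r l. strict_mono r \<and> (\<forall>i<k. l i \<in> S \<and> (\<lambda>m. g (r m) i) \<longlonglongrightarrow> l i)"
  using assms(2)
proof (induction k)
  case 0
  show ?case by (intro exI[of _ id]) (simp add: strict_mono_def)
next
  case (Suc k)
  have "\<And>m i. i < k \<Longrightarrow> g m i \<in> S" using Suc.prems by simp
  from Suc.IH[OF this] obtain r l
    where r: "strict_mono r" and l: "\<forall>i<k. l i \<in> S \<and> (\<lambda>m. g (r m) i) \<longlonglongrightarrow> l i"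
    by blast
  have "\<forall>m. g (r m) k \<in> S" using Suc.prems by simp
  then have "\<exists>lk\<in>S. \<exists>r'. strict_mono r' \<and> ((\<lambda>m. g (r m) k) \<circ> r') \<longlonglongrightarrow> lk"
    using \<open>compact S\<close>[unfolded compact_def, rule_format, of "\<lambda>m. g (r m) k"] by simp
  then obtain lk r' where lk: "lk \<in> S" and r': "strict_mono r'"
    and lim: "((\<lambda>m. g (r m) k) \<circ> r') \<longlonglongrightarrow> lk"
    by blast
  have "(l(k := lk)) i \<in> S \<and> (\<lambda>m. g ((r \<circ> r') m) i) \<longlonglongrightarrow> (l(k := lk)) i" if "i < Suc k" for i
  proof (cases "i = k")
    case False
    then have "(\<lambda>m. g (r m) i) \<longlonglongrightarrow> l i" and "l i \<in> S" using l that by auto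
    then show ?thesis using LIMSEQ_subseq_LIMSEQ[OF _ r'] False by (simp add: comp_def)
  qed (use lk lim in \<open>simp add: comp_def\<close>)
  then show ?case using strict_mono_o[OF r r'] by blast
qed

text \<open>A closed substitute for ``the fibre over \<open>b\<close> has at least \<open>k\<close> points''.\<close>

definition separated_fibre_set :: "'e::metric_space set \<Rightarrow> ('e \<Rightarrow> 'b) \<Rightarrow> 'b set \<Rightarrow> nat \<Rightarrow> real \<Rightarrow> 'b set"
  where "separated_fibre_set M p B k \<epsilon> = {b \<in> B. \<exists>g. (\<forall>i<k. g i \<in> M \<and> p (g i) = b) \<and>
           (\<forall>i<k. \<forall>j<k. i \<noteq> j \<longrightarrow> \<epsilon> \<le> dist (g i) (g j))}"

lemma separated_fibre_set_subset: "separated_fibre_set M p B k \<epsilon> \<subseteq> B"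
  by (auto simp: separated_fibre_set_def)

lemma closed_separated_fibre_set:
  fixes M :: "'e::metric_space set" and B :: "'b::metric_space set"
  assumes M: "compact M" and p: "continuous_on M p" and B: "closed B"
  shows "closed (separated_fibre_set M p B k \<epsilon>)"
  unfolding closed_sequential_limits
proof (intro allI impI, elim conjE)
  fix x :: "nat \<Rightarrow> 'b" and b
  assume x: "\<forall>n. x n \<in> separated_fibre_set M p B k \<epsilon>" and "x \<longlonglongrightarrow> b"
  have "\<forall>n. \<exists>g. (\<forall>i<k. g i \<in> M \<and> p (g i) = x n) \<and> (\<forall>i<k. \<forall>j<k. i \<noteq> j \<longrightarrow> \<epsilon> \<le> dist (g i) (g j))"
    using x unfolding separated_fibre_set_def by blast
  then obtain G where "\<forall>n. (\<forall>i<k. G n i \<in> M \<and> p (G n i) = x n) \<and>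
      (\<forall>i<k. \<forall>j<k. i \<noteq> j \<longrightarrow> \<epsilon> \<le> dist (G n i) (G n j))"
    by (auto dest: choice)
  then have GM: "\<And>n i. i < k \<Longrightarrow> G n i \<in> M" and Gp: "\<And>n i. i < k \<Longrightarrow> p (G n i) = x n"
    and Gdist: "\<And>n i j. i < k \<Longrightarrow> j < k \<Longrightarrow> i \<noteq> j \<Longrightarrow> \<epsilon> \<le> dist (G n i) (G n j)"
    by blast+
  obtain r l where r: "strict_mono r" and l: "\<forall>i<k. l i \<in> M \<and> (\<lambda>m. G (r m) i) \<longlonglongrightarrow> l i"
    using compact_common_convergent_subsequence[of M k G, OF M GM] by blast
  have "b \<in> B"
    using x \<open>x \<longlonglongrightarrow> b\<close> B by (auto simp: separated_fibre_set_def intro: closed_sequentially)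
  have "p (l i) = b" if "i < k" for i
  proof -
    have "(\<lambda>m. p (G (r m) i)) \<longlonglongrightarrow> p (l i)"
      using l that GM by (intro continuous_on_tendsto_compose[OF p]) auto
    moreover have "(\<lambda>m. p (G (r m) i)) \<longlonglongrightarrow> b"
      using LIMSEQ_subseq_LIMSEQ[OF \<open>x \<longlonglongrightarrow> b\<close> r] Gp[OF that] by (simp add: comp_def)
    ultimately show ?thesis by (rule LIMSEQ_unique)
  qed
  moreover have "\<epsilon> \<le> dist (l i) (l j)" if "i < k" "j < k" "i \<noteq> j" for i j
  proof -
    have "(\<lambda>m. dist (G (r m) i) (G (r m) j)) \<longlonglongrightarrow> dist (l i) (l j)"
      using l that by (intro tendsto_dist) auto
    then show ?thesis by (rule LIMSEQ_le_const) (use Gdist[OF that] in auto)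
  qed
  ultimately show "b \<in> separated_fibre_set M p B k \<epsilon>"
    using \<open>b \<in> B\<close> l unfolding separated_fibre_set_def by blast
qed

lemma card_fibre_ge_if_separated:
  assumes "b \<in> separated_fibre_set M p B k \<epsilon>" and "\<epsilon> > 0" and "finite {y \<in> M. p y = b}"
  shows "k \<le> card {y \<in> M. p y = b}"
proof -
  obtain g where g: "\<forall>i<k. g i \<in> M \<and> p (g i) = b"
    and sep: "\<forall>i<k. \<forall>j<k. i \<noteq> j \<longrightarrow> \<epsilon> \<le> dist (g i) (g j)"
    using assms(1) unfolding separated_fibre_set_def by blast
  have "inj_on g {..<k}"
  proof (rule inj_onI, rule ccontr)
    fix i j assume "i \<in> {..<k}" "j \<in> {..<k}" "g i = g j" "i \<noteq> j"
    then show False using sep \<open>\<epsilon> > 0\<close> by fastforce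
  qed
  moreover have "g ` {..<k} \<subseteq> {y \<in> M. p y = b}" using g by auto
  ultimately show ?thesis using card_inj_on_le[OF _ _ assms(3)] by fastforce
qed

lemma separated_fibre_set_Int_small_fibres:
  assumes "\<epsilon> > 0"
  shows "separated_fibre_set M p B k \<epsilon> \<inter> {b. finite {y \<in> M. p y = b} \<and> card {y \<in> M. p y = b} < k} = {}"
  using card_fibre_ge_if_separated[OF _ assms] by fastforce

lemma separated_fibre_set_if_large:
  assumes "b \<in> B" and "infinite {y \<in> M. p y = b} \<or> k \<le> card {y \<in> M. p y = b}"
  obtains m where "b \<in> separated_fibre_set M p B k (1 / real (Suc m))"
proof -
  obtain S where S: "S \<subseteq> {y \<in> M. p y = b}" "finite S" "card S = k"
  proof (cases "finite {y \<in> M. p y = b}")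
    case True
    then have "k \<le> card {y \<in> M. p y = b}" using assms(2) by simp
    then show ?thesis using that by (rule obtain_subset_with_card_n)
  next
    case False
    then show ?thesis using that infinite_arbitrarily_large by blast
  qed
  obtain g where g: "bij_betw g {0..<k} S"
    using ex_bij_betw_nat_finite[OF S(2)] S(3) by blast
  obtain \<delta> where "\<delta> > 0" and \<delta>: "\<forall>x\<in>S. \<forall>y\<in>S. x \<noteq> y \<longrightarrow> \<delta> \<le> dist x y"
    using finite_imp_uniformly_discrete[OF S(2)] by auto
  obtain m where "inverse (real (Suc m)) < \<delta>"
    using reals_Archimedean[OF \<open>\<delta> > 0\<close>] by blast
  then have m: "1 / real (Suc m) < \<delta>" by (simp add: inverse_eq_divide)
  have "g i \<in> S" if "i < k" for i
    using g that by (auto simp: bij_betw_def)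
  then have "\<forall>i<k. g i \<in> M \<and> p (g i) = b" using S(1) by blast
  moreover have "1 / real (Suc m) \<le> dist (g i) (g j)" if "i < k" "j < k" "i \<noteq> j" for i j
  proof -
    have "g i \<noteq> g j" using g that by (auto simp: bij_betw_def inj_on_def)
    then show ?thesis using \<delta> m \<open>\<And>i. i < k \<Longrightarrow> g i \<in> S\<close> that by fastforce
  qed
  ultimately show ?thesis
    using that[of m] assms(1) unfolding separated_fibre_set_def by blast
qed

locale minimal_factor = minimal_system B f
  for B :: "'b::metric_space set" and f :: "'b \<Rightarrow> 'b" +
  fixes M :: "'e::metric_space set" and p :: "'e \<Rightarrow> 'b" and F :: "'e \<Rightarrow> 'e"
  assumes compact_M: "compact M" and continuous_p: "continuous_on M p"
    and F_image: "F ` M = M" and p_into: "p ` M \<subseteq> B"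
    and semiconj: "\<And>x. x \<in> M \<Longrightarrow> p (F x) = f (p x)"
begin

definition fibre :: "'b \<Rightarrow> 'e set" where
  "fibre b = {y \<in> M. p y = b}"

lemma fibre_image_subset:
  assumes "b \<in> homeo_part f B"
  shows "fibre (f b) \<subseteq> F ` fibre b"
proof
  fix y assume "y \<in> fibre (f b)"
  then obtain w where w: "w \<in> M" "y = F w" and "p y = f b"
    using F_image unfolding fibre_def by (metis (mono_tags, lifting) imageE mem_Collect_eq)
  then have "f (p w) = f b" using semiconj by simp
  then have "p w = b" using homeo_part_unique_preimage[OF assms] p_into w(1) by blast
  then show "y \<in> F ` fibre b" using w unfolding fibre_def by blast
qed

lemma card_fibre_image_le:
  assumes "b \<in> homeo_part f B" and "finite (fibre b)"
  shows "finite (fibre (f b))" and "card (fibre (f b)) \<le> card (fibre b)"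
proof -
  show "finite (fibre (f b))"
    using fibre_image_subset[OF assms(1)] assms(2) by (blast intro: finite_subset)
  have "card (fibre (f b)) \<le> card (F ` fibre b)"
    using fibre_image_subset[OF assms(1)] assms(2) by (intro card_mono) auto
  also have "\<dots> \<le> card (fibre b)" using assms(2) by (rule card_image_le)
  finally show "card (fibre (f b)) \<le> card (fibre b)" .
qed

lemma exists_min_card_fibre:
  assumes "z \<in> homeo_part f B" and "finite (fibre z)"
  obtains x0 where "x0 \<in> homeo_part f B" and "finite (fibre x0)"
    and "\<And>x. x \<in> homeo_part f B \<Longrightarrow> finite (fibre x) \<Longrightarrow> card (fibre x0) \<le> card (fibre x)"
  using ex_has_least_nat[of "\<lambda>x. x \<in> homeo_part f B \<and> finite (fibre x)" z "\<lambda>x. card (fibre x)"]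
    assms that by blast

context
  fixes x0 and N :: nat
  assumes x0_homeo: "x0 \<in> homeo_part f B" and x0_finite: "finite (fibre x0)"
    and x0_card: "card (fibre x0) = N"
    and N_min: "\<And>x. x \<in> homeo_part f B \<Longrightarrow> finite (fibre x) \<Longrightarrow> N \<le> card (fibre x)"
begin

lemma orbit_card_fibre:
  "(f ^^ n) x0 \<in> homeo_part f B \<and> finite (fibre ((f ^^ n) x0)) \<and> card (fibre ((f ^^ n) x0)) = N"
proof (induction n)
  case (Suc n)
  then have "f ((f ^^ n) x0) \<in> homeo_part f B" by (blast intro: homeo_part_image)
  then show ?case
    using Suc card_fibre_image_le[of "(f ^^ n) x0"] N_min[of "f ((f ^^ n) x0)"] by fastforce
qed (use x0_homeo x0_finite x0_card in simp)

text \<open>A nonempty open set of base points with \<open>N + 1\<close> separated fibre points would be visited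
by the orbit of \<open>x0\<close>, whose fibres have only \<open>N\<close> points.\<close>

lemma nowhere_dense_large_fibres:
  assumes "\<epsilon> > 0"
  shows "nowhere_dense_closedin (top_of_set B) (separated_fibre_set M p B (Suc N) \<epsilon>)"
  unfolding nowhere_dense_iff
proof (intro conjI allI impI; (elim conjE)?)
  show "separated_fibre_set M p B (Suc N) \<epsilon> \<subseteq> B"
    by (rule separated_fibre_set_subset)
  show "closed (separated_fibre_set M p B (Suc N) \<epsilon>)"
    by (rule closed_separated_fibre_set[OF compact_M continuous_p closed_B])
  fix W assume W: "openin (top_of_set B) W" "W \<subseteq> separated_fibre_set M p B (Suc N) \<epsilon>"
  show "W = {}"
  proof (rule ccontr)
    assume "W \<noteq> {}"
    then obtain n where "(f ^^ n) x0 \<in> W"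
      using orbit_meets_open[OF _ W(1)] x0_homeo by (auto simp: homeo_part_def)
    then have "Suc N \<le> card (fibre ((f ^^ n) x0))"
      using W(2) orbit_card_fibre assms unfolding fibre_def by (blast intro: card_fibre_ge_if_separated)
    then show False using orbit_card_fibre by simp
  qed
qed

text \<open>Where small fibres are dense, the sets of \<open>N\<close> separated fibre points are nowhere dense; a
generic point of the homeo-part avoids them all and so has fewer than \<open>N\<close> fibre points.\<close>

lemma nowhere_dense_small_fibres:
  "nowhere_dense_closedin (top_of_set B) (closure {b \<in> B. finite (fibre b) \<and> card (fibre b) < N})"
  (is "nowhere_dense_closedin _ (closure ?G)")
  unfolding nowhere_dense_iff
proof (intro conjI allI impI; (elim conjE)?)
  show "closure ?G \<subseteq> B" by (rule closure_minimal[OF _ closed_B]) auto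
  fix V assume V: "openin (top_of_set B) V" "V \<subseteq> closure ?G"
  show "V = {}"
  proof (rule ccontr)
    assume "V \<noteq> {}"
    define K where "K m = separated_fibre_set M p B N (1 / real (Suc m)) \<inter> closure V" for m
    have "countable (range K)" by simp
    moreover have "nowhere_dense_closedin (top_of_set B) (K m)" for m
    proof -
      have "separated_fibre_set M p B N (1 / real (Suc m)) \<inter> ?G = {}"
        using separated_fibre_set_Int_small_fibres[of "1 / real (Suc m)" M p B N]
        unfolding fibre_def by auto
      then show ?thesis unfolding K_def
        by (intro nowhere_dense_closedin_Int_closure[OF closed_B V(1,2)]
            closed_separated_fibre_set[OF compact_M continuous_p closed_B]
            separated_fibre_set_subset) auto
    qed
    ultimately obtain b where "b \<in> V" and b_homeo: "b \<in> homeo_part f B" and b: "b \<notin> \<Union>(range K)"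
      using homeo_part_generic_point[OF V(1) \<open>V \<noteq> {}\<close>, of "range K"] by blast
    have "b \<in> B" using b_homeo by (simp add: homeo_part_def)
    have "finite (fibre b) \<and> card (fibre b) < N"
    proof (rule ccontr)
      assume "\<not> (finite (fibre b) \<and> card (fibre b) < N)"
      then have "infinite {y \<in> M. p y = b} \<or> N \<le> card {y \<in> M. p y = b}"
        unfolding fibre_def by auto
      then obtain m where "b \<in> separated_fibre_set M p B N (1 / real (Suc m))"
        using separated_fibre_set_if_large[OF \<open>b \<in> B\<close>] by blast
      then have "b \<in> K m" unfolding K_def using \<open>b \<in> V\<close> closure_subset[of V] by blast
      then show False using b by blast
    qed
    then show False using N_min[OF b_homeo] by simp
  qed
qed simp

lemma residual_card_fibre_eq:
  "\<exists>R. residual_in B R \<and> (\<forall>b\<in>R. finite (fibre b) \<and> card (fibre b) = N)"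
proof -
  define \<N> where "\<N> = insert (closure {b \<in> B. finite (fibre b) \<and> card (fibre b) < N})
    (range (\<lambda>m. separated_fibre_set M p B (Suc N) (1 / real (Suc m))))"
  have "countable \<N>" by (simp add: \<N>_def)
  moreover have "nowhere_dense_closedin (top_of_set B) C" if "C \<in> \<N>" for C
  proof -
    from that consider "C = closure {b \<in> B. finite (fibre b) \<and> card (fibre b) < N}"
      | m where "C = separated_fibre_set M p B (Suc N) (1 / real (Suc m))"
      unfolding \<N>_def by blast
    then show ?thesis
      by cases (simp_all add: nowhere_dense_small_fibres nowhere_dense_large_fibres)
  qed
  ultimately have "residual_in B (B - \<Union>\<N>)" by (rule residual_in_Diff_Union)
  moreover have "finite (fibre b) \<and> card (fibre b) = N" if b: "b \<in> B - \<Union>\<N>" for b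
  proof -
    have "\<not> (finite (fibre b) \<and> card (fibre b) < N)"
      using b closure_subset[of "{b \<in> B. finite (fibre b) \<and> card (fibre b) < N}"]
      unfolding \<N>_def by blast
    moreover have "finite (fibre b) \<and> card (fibre b) < Suc N"
    proof (rule ccontr)
      assume "\<not> (finite (fibre b) \<and> card (fibre b) < Suc N)"
      then have "infinite {y \<in> M. p y = b} \<or> Suc N \<le> card {y \<in> M. p y = b}"
        unfolding fibre_def by auto
      then obtain m where "b \<in> separated_fibre_set M p B (Suc N) (1 / real (Suc m))"
        using b separated_fibre_set_if_large[of b B] by blast
      then show False using b unfolding \<N>_def by blast
    qed
    ultimately show ?thesis by auto
  qed
  ultimately show ?thesis by blast
qed

end

end

theorem proposition3:
  fixes E :: "'e::metric_space set" and B :: "'b::metric_space set"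
    and \<Gamma> :: "'g::metric_space set"
    and p :: "'e \<Rightarrow> 'b" and F :: "'e \<Rightarrow> 'e" and f :: "'b \<Rightarrow> 'b" and M :: "'e set"
    and z :: 'b
  assumes gb: "compact_graph_bundle E B p \<Gamma>"
    and F_cont: "continuous_on E F" and F_maps: "F ` E \<subseteq> E"
    and f_cont: "continuous_on B f" and f_maps: "f ` B \<subseteq> B"
    and semiconj: "\<forall>x\<in>E. p (F x) = f (p x)"
    and f_minimal: "minimal_set f B B"
    and M_minimal: "minimal_set F E M"
    and M_onto: "p ` M = B"
    and z_H: "z \<in> homeo_part f B"
    and z_fin: "finite {x\<in>M. p x = z}"
  shows "\<exists>N::nat.
           (\<exists>x\<in>homeo_part f B. finite {y\<in>M. p y = x} \<and> card {y\<in>M. p y = x} = N) \<and>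
           (\<forall>x\<in>homeo_part f B. finite {y\<in>M. p y = x} \<longrightarrow> N \<le> card {y\<in>M. p y = x}) \<and>
           (\<exists>R. residual_in B R \<and>
                (\<forall>b\<in>R. finite {y\<in>M. p y = b} \<and> card {y\<in>M. p y = b} = N))"
proof -
  have "compact E" "compact B" "continuous_on E p"
    using gb by (auto simp: compact_graph_bundle_def)
  have "M \<subseteq> E" "closed M"
    using M_minimal by (auto simp: minimal_set_def)
  then have "compact M"
    using compact_Int_closed[OF \<open>compact E\<close> \<open>closed M\<close>] by (simp add: Int_absorb1)
  have "minimal_system M F"
    using \<open>compact M\<close> continuous_on_subset[OF F_cont \<open>M \<subseteq> E\<close>] M_minimal
    by unfold_locales (auto simp: minimal_set_def)
  then have "F ` M = M" by (rule minimal_system.image_eq)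
  interpret minimal_factor B f M p F
    using \<open>compact B\<close> f_cont f_maps f_minimal \<open>compact M\<close> \<open>F ` M = M\<close> M_onto semiconj \<open>M \<subseteq> E\<close>
      continuous_on_subset[OF \<open>continuous_on E p\<close> \<open>M \<subseteq> E\<close>]
    by unfold_locales auto
  obtain x0 where "x0 \<in> homeo_part f B" "finite (fibre x0)"
    and "\<And>x. x \<in> homeo_part f B \<Longrightarrow> finite (fibre x) \<Longrightarrow> card (fibre x0) \<le> card (fibre x)"
    using exists_min_card_fibre z_H z_fin unfolding fibre_def by blast
  with residual_card_fibre_eq[of x0 "card (fibre x0)"] show ?thesis
    unfolding fibre_def by blast
qed

end
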